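(* Let $r\ge2$, $a_1,\dots,a_r\in\mathbb{N}$ and $n_1,\dots,n_r\ge1$. In the sampling without replacement Pólya–Eggenberger urn with $r$ types of balls and ball transition matrix $\mathrm{diag}(-a_1,\dots,-a_r)$, started with $a_jn_j$ balls of type $j$, let $\mathbf{Y}_{\mathbf{an}}=(Y^{[1]}_{\mathbf{an}},\dots,Y^{[r-1]}_{\mathbf{an}})$ count the numbers of balls of types $1,\dots,r-1$ when the process stops. Then for $0\le k_j\le n_j$, \[ \mathbb{P}\{\mathbf{Y}_{\mathbf{an}}=(a_1k_1,\dots,a_{r-1}k_{r-1})\}=\sum_{\ell_1=k_1}^{n_1}\cdots\sum_{\ell_{r-1}=k_{r-1}}^{n_{r-1}}\frac{\prod_{j=1}^{r-1}\binom{n_j}{\ell_j}\binom{\ell_j}{k_j}(-1)^{\ell_j-k_j}}{\binom{n_r+\sum_{f=1}^{r-1}\frac{a_f\ell_f}{a_r}}{n_r}}, \] and for all integers $s_1,\dots,s_{r-1}\ge0$, \[ \mathbb{E}\Big(\prod_{j=1}^{r-1}\Big(\frac{Y^{[j]}_{\mathbf{an}}}{a_j}\Big)^{\underline{s_j}}\Big)=\frac{\prod_{j=1}^{r-1}n_j^{\underline{s_j}}}{\binom{n_r+\sum_{f=1}^{r-1}\frac{a_fs_f}{a_r}}{n_r}}. \]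
   Context: The urn: at each step a ball is drawn uniformly at random among all balls present; if it is of type $j$, the number of type $j$ balls decreases by $a_j$. The process stops when either all type $r$ balls have been removed or all balls of types $1,\dots,r-1$ have been removed; $Y^{[j]}_{\mathbf{an}}$ is the number of type $j$ balls at that time. For real $x$ and integer $k\ge0$, $x^{\underline{k}}=x(x-1)\cdots(x-k+1)$ and $\binom{x}{k}=x^{\underline{k}}/k!$. *)

theory Defs
  imports "HOL-Probability.Probability"
begin

definition falling_fact :: "real \<Rightarrow> nat \<Rightarrow> real" where
  "falling_fact x k = (\<Prod>i<k. x - real i)"

text \<open>Ball configuration: c j = number of type-j balls, types 1..r.
  The multiset of all balls present (one element j per ball of type j).\<close>
definition urn_balls :: "nat \<Rightarrow> (nat \<Rightarrow> nat) \<Rightarrow> nat multiset" where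
  "urn_balls r c = (\<Sum>j\<in>{1..r}. replicate_mset (c j) j)"

definition urn_stopped :: "nat \<Rightarrow> (nat \<Rightarrow> nat) \<Rightarrow> bool" where
  "urn_stopped r c \<longleftrightarrow> c r = 0 \<or> (\<forall>j\<in>{1..<r}. c j = 0)"

primrec urn_run :: "nat \<Rightarrow> nat \<Rightarrow> (nat \<Rightarrow> nat) \<Rightarrow> (nat \<Rightarrow> nat) \<Rightarrow> (nat \<Rightarrow> nat) pmf" where
  "urn_run 0 r a c = return_pmf c"
| "urn_run (Suc m) r a c =
     (if urn_stopped r c then return_pmf c
      else bind_pmf (pmf_of_multiset (urn_balls r c))
             (\<lambda>j. urn_run m r a (c(j := c j - a j))))"

text \<open>Each step removes at least one ball (a j \<ge> 1),
  so the total number of balls is a sufficient number of steps.\<close>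
definition urn_final :: "nat \<Rightarrow> (nat \<Rightarrow> nat) \<Rightarrow> (nat \<Rightarrow> nat) \<Rightarrow> (nat \<Rightarrow> nat) pmf" where
  "urn_final r a n = urn_run (\<Sum>j\<in>{1..r}. a j * n j) r a (\<lambda>j. a j * n j)"

end

theory Submission
  imports Defs
begin

text \<open>
  Write the state as \<open>c j = a j * m j\<close> and let \<open>\<sigma> = (\<Sum>j<r. a j * s j) / a r\<close>.
  The function \<open>G m = (\<Prod>j<r. falling_fact (m j) (s j)) / ((m r + \<sigma>) gchoose m r)\<close>
  is harmonic for the urn: a ball of type \<open>j\<close> is drawn with probability
  proportional to \<open>a j * m j\<close>, and the weighted average of \<open>G\<close> over the successor states is
  \<open>G m\<close> again. In a stopped state \<open>G\<close> equals the product of falling factorials of the observed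
  counts, so the factorial moments are \<open>G n\<close>. The point probabilities follow by expanding
  \<open>[y = k] = (\<Sum>l. (-1)^(l - k) * (l choose k) * (y choose l))\<close> and taking expectations termwise.
\<close>

lemma falling_fact_Suc: "falling_fact x (Suc s) = falling_fact x s * (x - real s)"
  by (simp add: falling_fact_def)

lemma falling_fact_Suc_left: "falling_fact x (Suc s) = x * falling_fact (x - 1) s"
  unfolding falling_fact_def prod.lessThan_Suc_shift by (simp add: algebra_simps)

lemma falling_fact_of_nat_pred:
  "real m * falling_fact (real (m - 1)) s = (real m - real s) * falling_fact (real m) s"
proof (cases m)
  case 0
  then show ?thesis by (cases s) (auto simp: falling_fact_def prod.lessThan_Suc_shift)
next
  case (Suc k)
  then show ?thesis
    using falling_fact_Suc[of "real m" s] falling_fact_Suc_left[of "real m" s]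
    by (simp add: algebra_simps)
qed

lemma falling_fact_zero_Suc: "falling_fact 0 (Suc s) = 0"
  unfolding falling_fact_def by (intro prod_zero bexI[of _ 0]) auto

lemma binomial_eq_falling_fact: "real (n choose l) = falling_fact (real n) l / fact l"
  by (simp add: binomial_gbinomial gbinomial_prod_rev falling_fact_def atLeast0LessThan)

lemma gbinomial_pos: "x \<ge> real k \<Longrightarrow> (x gchoose k) > 0"
  unfolding gbinomial_prod_rev by (intro divide_pos_pos prod_pos) auto

lemma indicator_eq_alternating_binomial_sum:
  assumes "y \<le> N" "k \<le> N"
  shows "(if y = k then 1 else 0)
         = (\<Sum>l\<in>{k..N}. (-1) ^ (l - k) * real (l choose k) * real (y choose l))"
proof (cases "y < k")
  case True
  then show ?thesis by (auto intro!: sum.neutral simp: binomial_eq_0)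
next
  case False
  have "(\<Sum>l\<in>{k..N}. (-1) ^ (l - k) * real (l choose k) * real (y choose l))
      = (\<Sum>l\<in>{k..y}. (-1) ^ (l - k) * real (l choose k) * real (y choose l))"
    using assms False by (intro sum.mono_neutral_right) (auto simp: binomial_eq_0)
  also have "\<dots> = (\<Sum>l\<in>{k..y}. real (y choose k) * ((-1) ^ (l - k) * real ((y - k) choose (l - k))))"
  proof (intro sum.cong refl)
    fix l assume "l \<in> {k..y}"
    then have "(y choose l) * (l choose k) = (y choose k) * ((y - k) choose (l - k))"
      by (intro choose_mult) auto
    then show "(-1) ^ (l - k) * real (l choose k) * real (y choose l)
             = real (y choose k) * ((-1) ^ (l - k) * real ((y - k) choose (l - k)))"
      by (metis (no_types, lifting) mult.commute mult.left_commute of_nat_mult)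
  qed
  also have "\<dots> = real (y choose k) * (\<Sum>i\<in>{0..y - k}. (-1) ^ i * real ((y - k) choose i))"
    unfolding sum_distrib_left using False
    by (intro sum.reindex_bij_witness[of _ "\<lambda>i. i + k" "\<lambda>l. l - k"]) auto
  also have "\<dots> = (if y = k then 1 else 0)"
    using False choose_alternating_sum[of "y - k", where 'a=real] by (auto simp: atLeast0AtMost)
  finally show ?thesis ..
qed

lemma indicator_eq_alternating_binomial_sum_PiE:
  assumes "finite I" and "\<forall>j\<in>I. y j \<le> N j \<and> k j \<le> N j"
  shows "(if \<forall>j\<in>I. y j = k j then 1 else 0)
         = (\<Sum>l\<in>PiE I (\<lambda>j. {k j..N j}).
              \<Prod>j\<in>I. (-1) ^ (l j - k j) * real (l j choose k j) * real (y j choose l j))"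
proof -
  have "(if \<forall>j\<in>I. y j = k j then 1 else 0) = (\<Prod>j\<in>I. if y j = k j then 1 else 0 :: real)"
    using assms(1) by (induction I rule: finite_induct) auto
  also have "\<dots> = (\<Prod>j\<in>I. \<Sum>l\<in>{k j..N j}. (-1) ^ (l - k j) * real (l choose k j) * real (y j choose l))"
    using assms(2) by (intro prod.cong refl indicator_eq_alternating_binomial_sum) auto
  also have "\<dots> = (\<Sum>l\<in>PiE I (\<lambda>j. {k j..N j}).
              \<Prod>j\<in>I. (-1) ^ (l j - k j) * real (l j choose k j) * real (y j choose l j))"
    using assms(1) by (rule prod_sum_PiE) auto
  finally show ?thesis .
qed

lemma count_urn_balls: "count (urn_balls r c) j = (if j \<in> {1..r} then c j else 0)"
  unfolding urn_balls_def count_sum by (simp add: sum.delta)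

lemma size_urn_balls: "size (urn_balls r c) = (\<Sum>j\<in>{1..r}. c j)"
  unfolding urn_balls_def by (induction rule: infinite_finite_induct) auto

lemma set_mset_urn_balls: "set_mset (urn_balls r c) \<subseteq> {1..r}"
proof
  fix x assume "x \<in># urn_balls r c"
  then have "count (urn_balls r c) x \<noteq> 0" by simp
  then show "x \<in> {1..r}" by (simp add: count_urn_balls split: if_splits)
qed

lemma urn_balls_not_empty: "\<not> urn_stopped r c \<Longrightarrow> r \<ge> 1 \<Longrightarrow> urn_balls r c \<noteq> {#}"
  using count_urn_balls[of r c r] by (auto simp: urn_stopped_def)

lemma finite_set_pmf_urn_run: "r \<ge> 1 \<Longrightarrow> finite (set_pmf (urn_run k r a c))"
  by (induction k arbitrary: c) (auto simp: urn_balls_not_empty)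

lemma set_pmf_urn_run:
  assumes "\<forall>j\<in>{1..r}. c j = a j * m j" "c' \<in> set_pmf (urn_run k r a c)" "r \<ge> 1"
  shows "\<forall>j\<in>{1..r}. \<exists>y\<le>m j. c' j = a j * y"
  using assms(1,2)
proof (induction k arbitrary: c m)
  case 0
  then show ?case by auto
next
  case (Suc k)
  show ?case
  proof (cases "urn_stopped r c")
    case True
    then show ?thesis using Suc.prems by auto
  next
    case False
    with Suc.prems(2) urn_balls_not_empty[OF False assms(3)] obtain j where
      j: "j \<in># urn_balls r c" and c': "c' \<in> set_pmf (urn_run k r a (c(j := c j - a j)))"
      by auto
    have "j \<in> {1..r}" using j set_mset_urn_balls by blast
    then have "\<forall>i\<in>{1..r}. (c(j := c j - a j)) i = a i * (m(j := m j - 1)) i"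
      using Suc.prems(1) by (auto simp: diff_mult_distrib2)
    from Suc.IH[OF this c'] show ?thesis
      by (metis (no_types, lifting) diff_le_self fun_upd_apply le_trans)
  qed
qed

lemma sum_fun_upd_pred:
  fixes m :: "'a \<Rightarrow> nat"
  assumes "finite A" "j \<in> A" "m j \<ge> 1"
  shows "(\<Sum>i\<in>A. (m(j := m j - 1)) i) + 1 = (\<Sum>i\<in>A. m i)"
proof -
  have "(\<Sum>i\<in>A - {j}. (m(j := m j - 1)) i) = (\<Sum>i\<in>A - {j}. m i)"
    by (intro sum.cong) auto
  then show ?thesis
    using assms by (simp add: sum.remove[of A j])
qed

section \<open>A harmonic function of the urn\<close>

definition scaled_falling_product :: "nat \<Rightarrow> (nat \<Rightarrow> nat) \<Rightarrow> (nat \<Rightarrow> nat) \<Rightarrow> (nat \<Rightarrow> nat) \<Rightarrow> real"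
  where "scaled_falling_product r a s c = (\<Prod>j\<in>{1..<r}. falling_fact (real (c j) / real (a j)) (s j))"

definition urn_harmonic :: "nat \<Rightarrow> (nat \<Rightarrow> nat) \<Rightarrow> (nat \<Rightarrow> nat) \<Rightarrow> (nat \<Rightarrow> nat) \<Rightarrow> real"
  where "urn_harmonic r a s m =
    (\<Prod>j\<in>{1..<r}. falling_fact (real (m j)) (s j))
    / ((real (m r) + (\<Sum>f\<in>{1..<r}. real (a f) * real (s f) / real (a r))) gchoose m r)"

lemma urn_harmonic_stopped:
  assumes "m r = 0 \<or> (\<forall>j\<in>{1..<r}. m j = 0)"
  shows "urn_harmonic r a s m = (\<Prod>j\<in>{1..<r}. falling_fact (real (m j)) (s j))"
proof (cases "m r = 0 \<or> (\<forall>j\<in>{1..<r}. s j = 0)")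
  case True
  then show ?thesis
    using binomial_gbinomial[of "m r" "m r", where 'a=real] by (auto simp: urn_harmonic_def)
next
  case False
  with assms obtain j where j: "j \<in> {1..<r}" "m j = 0" "s j > 0" by auto
  then have "falling_fact (real (m j)) (s j) = 0"
    by (auto simp: falling_fact_zero_Suc gr0_conv_Suc)
  with j(1) have zero: "(\<Prod>j\<in>{1..<r}. falling_fact (real (m j)) (s j)) = 0"
    by (intro prod_zero) auto
  show ?thesis unfolding urn_harmonic_def zero by simp
qed

lemma scaled_falling_product_stopped:
  assumes "\<forall>j\<in>{1..<r}. a j \<ge> 1 \<and> c j = a j * m j" "m r = 0 \<or> (\<forall>j\<in>{1..<r}. m j = 0)"
  shows "scaled_falling_product r a s c = urn_harmonic r a s m"
proof -
  have "real (c j) / real (a j) = real (m j)" if "j \<in> {1..<r}" for j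
  proof -
    from assms(1) that have "a j \<ge> 1" "c j = a j * m j" by auto
    then show ?thesis by simp
  qed
  then show ?thesis
    unfolding scaled_falling_product_def urn_harmonic_stopped[OF assms(2)] by simp
qed

lemma urn_harmonic_remove_ball:
  assumes "j \<in> {1..<r}"
  shows "real (m j) * urn_harmonic r a s (m(j := m j - 1))
         = (real (m j) - real (s j)) * urn_harmonic r a s m"
proof -
  define P where "P = (\<Prod>i\<in>{1..<r}-{j}. falling_fact (real (m i)) (s i))"
  have "(\<Prod>i\<in>{1..<r}. falling_fact (real ((m(j := m j - 1)) i)) (s i))
        = falling_fact (real (m j - 1)) (s j) * P"
    using assms unfolding P_def by (subst prod.remove[of _ j]) (auto intro!: prod.cong)
  moreover have "(\<Prod>i\<in>{1..<r}. falling_fact (real (m i)) (s i)) = falling_fact (real (m j)) (s j) * P"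
    using assms unfolding P_def by (subst prod.remove[of _ j]) auto
  ultimately show ?thesis
    using assms falling_fact_of_nat_pred[of "m j" "s j"]
    by (simp add: urn_harmonic_def mult.assoc[symmetric])
qed

lemma urn_harmonic_remove_last_ball:
  fixes a s :: "nat \<Rightarrow> nat"
  assumes "m r \<ge> 1"
  defines "\<sigma> \<equiv> (\<Sum>f\<in>{1..<r}. real (a f) * real (s f) / real (a r))"
  shows "real (m r) * urn_harmonic r a s (m(r := m r - 1))
         = (real (m r) + \<sigma>) * urn_harmonic r a s m"
proof -
  define P where "P = (\<Prod>j\<in>{1..<r}. falling_fact (real (m j)) (s j))"
  define x where "x = real (m r) + \<sigma>"
  have "\<sigma> \<ge> 0" unfolding \<sigma>_def by (intro sum_nonneg) auto
  then have pos: "x > 0" "((x - 1) gchoose (m r - 1)) > 0"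
    using assms(1) by (auto simp: x_def intro!: gbinomial_pos)
  have "x - 1 = real (m r - 1) + \<sigma>"
    using assms(1) by (simp add: x_def of_nat_diff)
  then have G': "urn_harmonic r a s (m(r := m r - 1)) = P / ((x - 1) gchoose (m r - 1))"
    unfolding urn_harmonic_def P_def \<sigma>_def by (auto intro!: prod.cong arg_cong2[where f="(/)"])
  have G: "urn_harmonic r a s m = P / (x / real (m r) * ((x - 1) gchoose (m r - 1)))"
    using assms(1) unfolding urn_harmonic_def P_def x_def \<sigma>_def
    by (subst gbinomial_absorption'[symmetric]) auto
  have "real (m r) * urn_harmonic r a s (m(r := m r - 1)) = x * urn_harmonic r a s m"
    unfolding G G' using assms(1) pos by (simp add: field_simps)
  then show ?thesis by (simp add: x_def)
qed

lemma urn_harmonic_mean_value: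
  assumes "r \<ge> 1" "a r \<ge> 1" "m r \<ge> 1"
  shows "(\<Sum>j\<in>{1..r}. real (a j) * real (m j) * urn_harmonic r a s (m(j := m j - 1)))
         = (\<Sum>j\<in>{1..r}. real (a j) * real (m j)) * urn_harmonic r a s m"
proof -
  define \<sigma> where "\<sigma> = (\<Sum>f\<in>{1..<r}. real (a f) * real (s f) / real (a r))"
  define G where "G = urn_harmonic r a s m"
  have split: "{1..r} = insert r {1..<r}" using assms(1) by auto
  \<comment> \<open>This is what makes the terms \<open>a j * s j\<close> of the types \<open>j < r\<close> cancel.\<close>
  have "real (a r) * \<sigma> = (\<Sum>f\<in>{1..<r}. real (a f) * real (s f))"
    unfolding \<sigma>_def sum_distrib_left using assms(2) by (intro sum.cong) auto
  then have total: "real (a r) * (real (m r) + \<sigma>) + (\<Sum>j\<in>{1..<r}. real (a j) * (real (m j) - real (s j)))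
             = (\<Sum>j\<in>{1..r}. real (a j) * real (m j))"
    unfolding split by (simp add: algebra_simps sum_subtractf)
  have rest: "(\<Sum>j\<in>{1..<r}. real (a j) * real (m j) * urn_harmonic r a s (m(j := m j - 1)))
                 = (\<Sum>j\<in>{1..<r}. real (a j) * (real (m j) - real (s j))) * G"
    unfolding sum_distrib_right G_def
  proof (intro sum.cong refl)
    fix j assume "j \<in> {1..<r}"
    from urn_harmonic_remove_ball[OF this, of m a s]
    show "real (a j) * real (m j) * urn_harmonic r a s (m(j := m j - 1))
          = real (a j) * (real (m j) - real (s j)) * urn_harmonic r a s m"
      by (simp add: mult.assoc)
  qed
  have "(\<Sum>j\<in>{1..r}. real (a j) * real (m j) * urn_harmonic r a s (m(j := m j - 1)))
        = real (a r) * (real (m r) * urn_harmonic r a s (m(r := m r - 1)))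
          + (\<Sum>j\<in>{1..<r}. real (a j) * real (m j) * urn_harmonic r a s (m(j := m j - 1)))"
    unfolding split by (simp add: mult.assoc)
  also have "\<dots> = (real (a r) * (real (m r) + \<sigma>)
                     + (\<Sum>j\<in>{1..<r}. real (a j) * (real (m j) - real (s j)))) * G"
    unfolding rest urn_harmonic_remove_last_ball[where m=m and r=r and a=a and s=s, OF assms(3)] \<sigma>_def G_def
    by (simp add: algebra_simps)
  finally show ?thesis unfolding total G_def .
qed

lemma expectation_urn_run:
  assumes "r \<ge> 1" "\<forall>j\<in>{1..r}. a j \<ge> 1"
    and "\<forall>j\<in>{1..r}. c j = a j * m j" "(\<Sum>j\<in>{1..r}. m j) \<le> k"
  shows "measure_pmf.expectation (urn_run k r a c) (scaled_falling_product r a s) = urn_harmonic r a s m"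
  using assms(3,4)
proof (induction k arbitrary: c m)
  case 0
  have "m r \<le> (\<Sum>j\<in>{1..r}. m j)" using assms(1) by (intro member_le_sum) auto
  with 0 assms(2) show ?case
    by (simp add: scaled_falling_product_stopped)
next
  case (Suc k)
  have zero_iff: "c j = 0 \<longleftrightarrow> m j = 0" if "j \<in> {1..r}" for j
  proof -
    from Suc.prems(1) assms(2) that have "a j \<ge> 1" "c j = a j * m j" by auto
    then show ?thesis by simp
  qed
  show ?case
  proof (cases "urn_stopped r c")
    case True
    then have "m r = 0 \<or> (\<forall>j\<in>{1..<r}. m j = 0)"
      using zero_iff assms(1) by (auto simp: urn_stopped_def)
    with True Suc.prems(1) assms(2) show ?thesis
      by (simp add: scaled_falling_product_stopped)
  next
    case False
    define M where "M = urn_balls r c"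
    define T where "T = (\<Sum>j\<in>{1..r}. real (a j) * real (m j))"
    have ne: "M \<noteq> {#}" unfolding M_def using urn_balls_not_empty[OF False assms(1)] .
    have mr: "m r \<ge> 1" using False zero_iff assms(1) by (auto simp: urn_stopped_def)
    have sizeM: "real (size M) = T"
      using Suc.prems(1) by (simp add: M_def T_def size_urn_balls of_nat_sum)
    have step: "pmf (pmf_of_multiset M) j *\<^sub>R
                  measure_pmf.expectation (urn_run k r a (c(j := c j - a j))) (scaled_falling_product r a s)
                = real (a j) * real (m j) * urn_harmonic r a s (m(j := m j - 1)) / T"
      if j: "j \<in> {1..r}" for j
    proof (cases "m j = 0")
      case False
      have "\<forall>i\<in>{1..r}. (c(j := c j - a j)) i = a i * (m(j := m j - 1)) i"
        using Suc.prems(1) j by (auto simp: diff_mult_distrib2)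
      moreover have "(\<Sum>i\<in>{1..r}. (m(j := m j - 1)) i) \<le> k"
        using sum_fun_upd_pred[of "{1..r}" j m] Suc.prems(2) j False by simp
      ultimately have IH: "measure_pmf.expectation (urn_run k r a (c(j := c j - a j))) (scaled_falling_product r a s)
                           = urn_harmonic r a s (m(j := m j - 1))"
        by (rule Suc.IH)
      have "pmf (pmf_of_multiset M) j = real (a j) * real (m j) / T"
        using ne j Suc.prems(1) by (simp add: sizeM[symmetric] M_def count_urn_balls)
      then show ?thesis unfolding IH by simp
    next
      case True
      then have "pmf (pmf_of_multiset M) j = 0"
        using ne j Suc.prems(1) by (simp add: M_def count_urn_balls)
      with True show ?thesis by simp
    qed
    have "measure_pmf.expectation (urn_run (Suc k) r a c) (scaled_falling_product r a s)
          = (\<Sum>j\<in>{1..r}. pmf (pmf_of_multiset M) j *\<^sub>R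
               measure_pmf.expectation (urn_run k r a (c(j := c j - a j))) (scaled_falling_product r a s))"
      using False ne set_mset_urn_balls[of r c] finite_set_pmf_urn_run[OF assms(1)]
      by (simp add: M_def pmf_expectation_bind[where A="{1..r}"])
    also have "\<dots> = (\<Sum>j\<in>{1..r}. real (a j) * real (m j) * urn_harmonic r a s (m(j := m j - 1))) / T"
      unfolding sum_divide_distrib by (intro sum.cong refl step) auto
    also have "\<dots> = urn_harmonic r a s m"
    proof -
      have ar: "a r \<ge> 1" using assms(1,2) by auto
      have "real (a r) * real (m r) \<le> T"
        unfolding T_def using assms(1) by (intro member_le_sum) auto
      moreover have "real (a r) * real (m r) > 0" using ar mr by simp
      ultimately show ?thesis
        using urn_harmonic_mean_value[where r=r and a=a and m=m and s=s, OF assms(1) ar mr]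
        by (simp add: T_def)
    qed
    finally show ?thesis .
  qed
qed

lemma expectation_urn_final:
  assumes "r \<ge> 1" "\<forall>j\<in>{1..r}. a j \<ge> 1"
  shows "measure_pmf.expectation (urn_final r a n) (scaled_falling_product r a s) = urn_harmonic r a s n"
  unfolding urn_final_def using assms by (intro expectation_urn_run sum_mono) auto

lemma prob_urn_final:
  assumes "r \<ge> 1" "\<forall>j\<in>{1..r}. a j \<ge> 1" "\<forall>j\<in>{1..<r}. k j \<le> n j"
  shows "measure_pmf.prob (urn_final r a n) {c. \<forall>j\<in>{1..<r}. c j = a j * k j}
         = (\<Sum>l\<in>PiE {1..<r} (\<lambda>j. {k j..n j}).
              (\<Prod>j\<in>{1..<r}. real (n j choose l j) * real (l j choose k j) * (-1) ^ (l j - k j))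
              / ((real (n r) + (\<Sum>f\<in>{1..<r}. real (a f) * real (l f) / real (a r))) gchoose n r))"
proof -
  define A where "A = {c :: nat \<Rightarrow> nat. \<forall>j\<in>{1..<r}. c j = a j * k j}"
  define L where "L = PiE {1..<r} (\<lambda>j. {k j..n j})"
  define coef where
    "coef l = (\<Prod>j\<in>{1..<r}. (-1) ^ (l j - k j) * real (l j choose k j) / fact (l j))" for l
  have expand: "indicator A c = (\<Sum>l\<in>L. coef l * scaled_falling_product r a l c)"
    if "c \<in> set_pmf (urn_final r a n)" for c
  proof -
    have "\<forall>j\<in>{1..r}. \<exists>y\<le>n j. c j = a j * y"
      using that unfolding urn_final_def by (intro set_pmf_urn_run[OF _ _ assms(1)]) auto
    then obtain y where y: "\<forall>j\<in>{1..r}. y j \<le> n j \<and> c j = a j * y j"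
      by metis
    have scaled: "y j \<le> n j" "real (c j) / real (a j) = real (y j)" "c j = a j * k j \<longleftrightarrow> y j = k j"
      if "j \<in> {1..<r}" for j
    proof -
      from y assms(2) that have "y j \<le> n j" "c j = a j * y j" "a j \<ge> 1" by auto
      then show "y j \<le> n j" "real (c j) / real (a j) = real (y j)" "c j = a j * k j \<longleftrightarrow> y j = k j"
        by auto
    qed
    have "indicator A c = (if \<forall>j\<in>{1..<r}. y j = k j then 1 else 0)"
      using scaled(3) by (simp add: A_def indicator_def)
    also have "\<dots> = (\<Sum>l\<in>L. \<Prod>j\<in>{1..<r}.
                        (-1) ^ (l j - k j) * real (l j choose k j) * real (y j choose l j))"
      unfolding L_def using scaled(1) assms(3)
      by (intro indicator_eq_alternating_binomial_sum_PiE) auto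
    also have "\<dots> = (\<Sum>l\<in>L. coef l * scaled_falling_product r a l c)"
      unfolding coef_def scaled_falling_product_def prod.distrib[symmetric]
      by (intro sum.cong prod.cong refl) (simp add: scaled(2) binomial_eq_falling_fact)
    finally show ?thesis .
  qed
  have "measure_pmf.prob (urn_final r a n) A = measure_pmf.expectation (urn_final r a n) (indicator A)"
    by simp
  also have "\<dots> = measure_pmf.expectation (urn_final r a n) (\<lambda>c. \<Sum>l\<in>L. coef l * scaled_falling_product r a l c)"
    by (intro integral_cong_AE AE_pmfI) (simp_all add: expand)
  also have "\<dots> = (\<Sum>l\<in>L. coef l * measure_pmf.expectation (urn_final r a n) (scaled_falling_product r a l))"
    using finite_set_pmf_urn_run[OF assms(1)]
    by (simp add: urn_final_def integral_sum integrable_measure_pmf_finite)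
  also have "\<dots> = (\<Sum>l\<in>L. coef l * urn_harmonic r a l n)"
    by (simp add: expectation_urn_final[OF assms(1,2)])
  also have "\<dots> = (\<Sum>l\<in>L.
              (\<Prod>j\<in>{1..<r}. real (n j choose l j) * real (l j choose k j) * (-1) ^ (l j - k j))
              / ((real (n r) + (\<Sum>f\<in>{1..<r}. real (a f) * real (l f) / real (a r))) gchoose n r))"
    unfolding coef_def urn_harmonic_def times_divide_eq_right prod.distrib[symmetric]
    by (intro sum.cong prod.cong refl arg_cong2[where f="(/)"])
      (simp add: binomial_eq_falling_fact[of "n _"])
  finally show ?thesis unfolding A_def L_def .
qed

theorem corollary4:
  fixes r :: nat and a n :: "nat \<Rightarrow> nat"
  assumes "r \<ge> 2"
    and "\<forall>j\<in>{1..r}. a j \<ge> 1"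
    and "\<forall>j\<in>{1..r}. n j \<ge> 1"
  shows "(\<forall>k :: nat \<Rightarrow> nat. (\<forall>j\<in>{1..<r}. k j \<le> n j) \<longrightarrow>
            measure_pmf.prob (urn_final r a n) {c. \<forall>j\<in>{1..<r}. c j = a j * k j}
            = (\<Sum>l\<in>PiE {1..<r} (\<lambda>j. {k j..n j}).
                 (\<Prod>j\<in>{1..<r}. real (n j choose l j) * real (l j choose k j)
                                  * (-1) ^ (l j - k j))
                 / ((real (n r) + (\<Sum>f\<in>{1..<r}. real (a f) * real (l f) / real (a r)))
                      gchoose n r)))
       \<and> (\<forall>s :: nat \<Rightarrow> nat.
            measure_pmf.expectation (urn_final r a n)
              (\<lambda>c. \<Prod>j\<in>{1..<r}. falling_fact (real (c j) / real (a j)) (s j))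
            = (\<Prod>j\<in>{1..<r}. falling_fact (real (n j)) (s j))
              / ((real (n r) + (\<Sum>f\<in>{1..<r}. real (a f) * real (s f) / real (a r)))
                   gchoose n r))"
proof -
  have r: "r \<ge> 1" using assms(1) by simp
  show ?thesis
    using prob_urn_final[OF r assms(2)] expectation_urn_final[OF r assms(2)]
    unfolding scaled_falling_product_def[abs_def] urn_harmonic_def by simp
qed

end
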